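(* \[ \sum_{n=1}^\infty\frac{p(n)}{n^3(3n-2)^2(3n-1)^2(2n-1)\binom{5n}{3n}^2\binom{2n}{n}}=3\pi^2, \] where $p(n)=574277n^6-1347180n^5+1274841n^4-621294n^3+164024n^2-22184n+1200$. *)

theory Defs
  imports Complex_Main
begin

definition p15 :: "real \<Rightarrow> real" where
  "p15 n = 574277*n^6 - 1347180*n^5 + 1274841*n^4 - 621294*n^3 + 164024*n^2 - 22184*n + 1200"

definition term15 :: "nat \<Rightarrow> real" where
  "term15 n = p15 (real n) /
     (real n ^ 3 * (3 * real n - 2)^2 * (3 * real n - 1)^2 * (2 * real n - 1)
      * real ((5*n) choose (3*n))^2 * real ((2*n) choose n))"

end

theory Submission
  imports Defs "HOL-Analysis.Gamma_Function"
begin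

text \<open>
  Put F(n,k) = 18 (3n)! (2n)! n! (4n)! / (5n)! * (k+n)! (k+3n)! / ((k+4n+1)! (k+5n+1)!) and
  G(n,k) = R(n,k) F(n,k) for an explicit rational certificate R. Both F(n+1,k)/F(n,k) and
  F(n,k+1)/F(n,k) are rational in n and k, so the WZ equation
  F(n,k) - F(n+1,k) = G(n,k+1) - G(n,k) reduces to one polynomial identity.
  Summing it over k shows that S(n) - S(n+1) = -G(n,0) for S(n) = \<Sum>k. F(n,k), and -G(n,0)
  is the (n+1)-st term of the series. Hence the series telescopes to S(0) = 18 \<zeta>(2) = 3 \<pi>^2
  minus the limit of S(N), which vanishes: (k+n+1)(k+n+2) F(n,k) decreases in k, and
  (n+1)(n+2) F(n,0) at least halves when n increases.
\<close>

lemma abs_sum_powers_le: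
  fixes c :: "nat \<Rightarrow> real"
  assumes "y \<ge> 0"
  shows "\<bar>\<Sum>j\<le>d. c j * y ^ j\<bar> \<le> (\<Sum>j\<le>d. \<bar>c j\<bar>) * (y + 1) ^ d"
proof -
  have "\<bar>\<Sum>j\<le>d. c j * y ^ j\<bar> \<le> (\<Sum>j\<le>d. \<bar>c j * y ^ j\<bar>)"
    by (rule sum_abs)
  also have "\<dots> = (\<Sum>j\<le>d. \<bar>c j\<bar> * y ^ j)"
    using assms by (simp add: abs_mult)
  also have "\<dots> \<le> (\<Sum>j\<le>d. \<bar>c j\<bar> * (y + 1) ^ d)"
  proof (rule sum_mono, rule mult_left_mono)
    fix j assume "j \<in> {..d}"
    then have "y ^ j \<le> (y + 1) ^ j" "(y + 1) ^ j \<le> (y + 1) ^ d"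
      using assms by (auto intro: power_mono power_increasing)
    then show "y ^ j \<le> (y + 1) ^ d" by linarith
  qed simp
  finally show ?thesis by (simp add: sum_distrib_right)
qed

lemma power_le_pochhammer:
  fixes a b :: "'a::linordered_semidom"
  assumes "0 \<le> b" "b \<le> a"
  shows "b ^ n \<le> pochhammer a n"
proof (induction n)
  case (Suc n)
  have "0 \<le> pochhammer a n"
    using order_trans[OF zero_le_power[OF assms(1)] Suc.IH] .
  then have "b ^ n * b \<le> pochhammer a n * (a + of_nat n)"
    using Suc assms by (intro mult_mono add_increasing2) auto
  then show ?case
    by (simp add: pochhammer_Suc mult.commute)
qed simp

lemma fact_add_pochhammer: "fact (m + j) = fact m * pochhammer (of_nat m + 1) j"
  by (simp only: pochhammer_fact pochhammer_product') (simp add: add.commute)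

lemma fact_mult_Suc: "fact (a * Suc n) = fact (a * n) * pochhammer (of_nat a * of_nat n + 1) a"
  using fact_add_pochhammer[of "a * n" a] by (simp add: add.commute)

lemma pochhammer_numerals:
  fixes a :: "'a::comm_semiring_1"
  shows "pochhammer a 2 = a * (a + 1)"
    and "pochhammer a 3 = a * (a + 1) * (a + 2)"
    and "pochhammer a 4 = a * (a + 1) * (a + 2) * (a + 3)"
    and "pochhammer a 5 = a * (a + 1) * (a + 2) * (a + 3) * (a + 4)"
  by (simp_all add: pochhammer_Suc eval_nat_numeral add.assoc)

lemma divide_identity_of_polynomial_identity:
  fixes P A M Q0 Q1 E0 E1 d f m :: "'a::field"
  assumes "P \<noteq> 0" "E0 \<noteq> 0" "E1 \<noteq> 0" "d \<noteq> 0" "f \<noteq> 0"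
    and "P * (E0 * f) - A * M = m * Q1 - f * Q0" and "E0 * f = d * E1"
  shows "1 - A / P * (M / (E0 * f)) = m / d * (Q1 / (P * E1)) - Q0 / (P * E0)"
  using assms by (simp add: field_simps) algebra

section \<open>Telescoping a WZ pair\<close>

lemma WZ_pair_sums:
  fixes F G :: "nat \<Rightarrow> nat \<Rightarrow> 'a::real_normed_vector"
  assumes pair: "\<And>n k. F n k - F (Suc n) k = G n (Suc k) - G n k"
    and summable: "\<And>n. summable (F n)"
    and G_lim: "\<And>n. G n \<longlonglongrightarrow> 0"
    and tail: "(\<lambda>n. suminf (F n)) \<longlonglongrightarrow> 0"
  shows "(\<lambda>n. - G n 0) sums suminf (F 0)"
proof -
  have step: "suminf (F n) - suminf (F (Suc n)) = - G n 0" for n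
  proof -
    have "(\<lambda>k. F n k - F (Suc n) k) sums (suminf (F n) - suminf (F (Suc n)))"
      using summable by (intro sums_diff summable_sums)
    moreover have "(\<lambda>k. F n k - F (Suc n) k) sums (0 - G n 0)"
      unfolding pair by (rule telescope_sums[OF G_lim])
    ultimately show ?thesis by (simp add: sums_unique2)
  qed
  have partial_sums: "(\<Sum>n<N. - G n 0) = suminf (F 0) - suminf (F N)" for N
    unfolding step[symmetric] by (rule sum_lessThan_telescope')
  have "(\<lambda>N. suminf (F 0) - suminf (F N)) \<longlonglongrightarrow> suminf (F 0) - 0"
    using tail by (intro tendsto_diff tendsto_const)
  then show ?thesis
    unfolding sums_def partial_sums by simp
qed

section \<open>The WZ pair\<close>

definition wz_U :: "nat \<Rightarrow> real" where
  "wz_U n = 18 * fact (3*n) * fact (2*n) * fact n * fact (4*n) / fact (5*n)"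

definition wz_K :: "nat \<Rightarrow> nat \<Rightarrow> real" where
  "wz_K n k = fact (k+n) * fact (k+3*n) / (fact (k+4*n+1) * fact (k+5*n+1))"

definition wz_F :: "nat \<Rightarrow> nat \<Rightarrow> real" where
  "wz_F n k = wz_U n * wz_K n k"

definition wz_U_ratio :: "real \<Rightarrow> real" where
  "wz_U_ratio x = pochhammer (3*x+1) 3 * pochhammer (2*x+1) 2 * (x+1) * pochhammer (4*x+1) 4
     / pochhammer (5*x+1) 5"

definition wz_K_ratio_n :: "real \<Rightarrow> real \<Rightarrow> real" where
  "wz_K_ratio_n x y = (y+x+1) * pochhammer (y+3*x+1) 3 / (pochhammer (y+4*x+2) 4 * pochhammer (y+5*x+2) 5)"

definition wz_K_ratio_k :: "real \<Rightarrow> real \<Rightarrow> real" where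
  "wz_K_ratio_k x y = (y+x+1) * (y+3*x+1) / ((y+4*x+2) * (y+5*x+2))"

lemma wz_F_pos: "wz_F n k > 0"
  unfolding wz_F_def wz_U_def wz_K_def by simp

lemma wz_U_Suc: "wz_U (Suc n) = wz_U n * wz_U_ratio (real n)"
proof -
  have "pochhammer (5 * real n + 1) 5 > 0"
    by (intro pochhammer_pos) simp
  then show ?thesis
    unfolding wz_U_def wz_U_ratio_def
    by (simp only: fact_mult_Suc fact_Suc) (simp add: field_simps)
qed

lemma wz_K_Suc_n: "wz_K (Suc n) k = wz_K n k * wz_K_ratio_n (real n) (real k)"
proof -
  have "k + Suc n = Suc (k + n)" "k + 3 * Suc n = (k + 3*n) + 3"
    "k + 4 * Suc n + 1 = (k + 4*n + 1) + 4" "k + 5 * Suc n + 1 = (k + 5*n + 1) + 5"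
    by simp_all
  then show ?thesis
    unfolding wz_K_def wz_K_ratio_n_def
    by (simp only: fact_add_pochhammer fact_Suc) (simp add: field_simps)
qed

lemma wz_K_Suc_k: "wz_K n (Suc k) = wz_K n k * wz_K_ratio_k (real n) (real k)"
  unfolding wz_K_def wz_K_ratio_k_def by (simp add: field_simps)

lemma wz_F_Suc_n: "wz_F (Suc n) k = wz_F n k * (wz_U_ratio (real n) * wz_K_ratio_n (real n) (real k))"
  unfolding wz_F_def wz_U_Suc wz_K_Suc_n by (simp add: mult_ac)

lemma wz_F_Suc_k: "wz_F n (Suc k) = wz_F n k * wz_K_ratio_k (real n) (real k)"
  unfolding wz_F_def wz_K_Suc_k by (simp add: mult_ac)

definition wz_Q_coeffs :: "real \<Rightarrow> real list" where
  "wz_Q_coeffs x =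
    [-568416 - 11900224*x - 111776872*x^2 - 624017016*x^3 - 2309534840*x^4 - 5977303032*x^5
       - 11104013896*x^6 - 14931970088*x^7 - 14437002632*x^8 - 9794271144*x^9 - 4428328432*x^10
       - 1198778496*x^11 - 147014912*x^12,
     -1651352 - 31112160*x - 261279122*x^2 - 1292877084*x^3 - 4193373926*x^4 - 9370363040*x^5
       - 14733159326*x^6 - 16312615372*x^7 - 12473019122*x^8 - 6276645400*x^9 - 1871920352*x^10
       - 250790144*x^11,
     -2093132 - 35178686*x - 261345551*x^2 - 1131380970*x^3 - 3163577241*x^4 - 5975267578*x^5
       - 7726158433*x^6 - 6757670790*x^7 - 3828716267*x^8 - 1269601656*x^9 - 187209056*x^10,
     -1497872 - 22261155*x - 144617810*x^2 - 539440790*x^3 - 1274183806*x^4 - 1977776255*x^5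
       - 2018613830*x^6 - 1307135480*x^7 - 487549082*x^8 - 79848720*x^9,
     -659156 - 8575530*x - 48030075*x^2 - 151365970*x^3 - 293768643*x^4 - 359754850*x^5
       - 271628125*x^6 - 115668730*x^7 - 21279081*x^8,
     -182300 - 2050250*x - 9717190*x^2 - 25179665*x^3 - 38553550*x^4 - 34901825*x^5
       - 17306360*x^6 - 3627660*x^7,
     -30920 - 295750*x - 1155735*x^2 - 2365090*x^3 - 2675715*x^4 - 1587880*x^5 - 386350*x^6,
     -2940 - 23395*x - 72510*x^2 - 109705*x^3 - 81150*x^4 - 23500*x^5,
     -120 - 770*x - 1775*x^2 - 1750*x^3 - 625*x^4]"

definition wz_Q :: "real \<Rightarrow> real \<Rightarrow> real" where
  "wz_Q x y = (\<Sum>j\<le>8. wz_Q_coeffs x ! j * y ^ j)"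

definition wz_cert :: "real \<Rightarrow> real \<Rightarrow> real" where
  "wz_cert x y = wz_Q x y / (pochhammer (5*x+1) 5 * (pochhammer (y+4*x+2) 3 * pochhammer (y+5*x+2) 4))"

definition wz_G :: "nat \<Rightarrow> nat \<Rightarrow> real" where
  "wz_G n k = wz_F n k * wz_cert (real n) (real k)"

lemma wz_Q_expand:
  "wz_Q x y = wz_Q_coeffs x ! 0 + wz_Q_coeffs x ! 1 * y + wz_Q_coeffs x ! 2 * y^2
    + wz_Q_coeffs x ! 3 * y^3 + wz_Q_coeffs x ! 4 * y^4 + wz_Q_coeffs x ! 5 * y^5
    + wz_Q_coeffs x ! 6 * y^6 + wz_Q_coeffs x ! 7 * y^7 + wz_Q_coeffs x ! 8 * y^8"
  unfolding wz_Q_def by (simp add: numeral_eq_Suc atMost_Suc)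

text \<open>The WZ equation divided by F(n,k), with all denominators cleared.\<close>

lemma wz_Q_polynomial_identity:
  fixes x y :: real
  shows "pochhammer (5*x+1) 5 * (pochhammer (y+4*x+2) 4 * pochhammer (y+5*x+2) 5)
      - pochhammer (3*x+1) 3 * pochhammer (2*x+1) 2 * (x+1) * pochhammer (4*x+1) 4
        * ((y+x+1) * pochhammer (y+3*x+1) 3)
    = (y+x+1) * (y+3*x+1) * wz_Q x (y+1) - (y+4*x+5) * (y+5*x+6) * wz_Q x y"
  unfolding wz_Q_expand wz_Q_coeffs_def pochhammer_numerals by simp algebra

lemma wz_cert_identity:
  fixes x y :: real
  assumes "x \<ge> 0" "y \<ge> 0"
  shows "1 - wz_U_ratio x * wz_K_ratio_n x y = wz_K_ratio_k x y * wz_cert x (y+1) - wz_cert x y"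
proof -
  have split: "pochhammer (y+4*x+2) 4 * pochhammer (y+5*x+2) 5
      = (pochhammer (y+4*x+2) 3 * pochhammer (y+5*x+2) 4) * ((y+4*x+5) * (y+5*x+6))"
    unfolding pochhammer_numerals by algebra
  have shift: "(pochhammer (y+4*x+2) 3 * pochhammer (y+5*x+2) 4) * ((y+4*x+5) * (y+5*x+6))
      = ((y+4*x+2) * (y+5*x+2)) * (pochhammer (y+1+4*x+2) 3 * pochhammer (y+1+5*x+2) 4)"
    unfolding pochhammer_numerals by algebra
  have nonzero: "pochhammer a n \<noteq> 0" if "a > 0" for a :: real and n
    using pochhammer_pos[OF that, of n] by simp
  show ?thesis
    unfolding wz_U_ratio_def wz_K_ratio_n_def wz_K_ratio_k_def wz_cert_def split
    by (rule divide_identity_of_polynomial_identity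
        [OF _ _ _ _ _ wz_Q_polynomial_identity[of x y, unfolded split] shift])
      (use assms in \<open>auto intro!: nonzero\<close>)
qed

lemma wz_F_pair: "wz_F n k - wz_F (Suc n) k = wz_G n (Suc k) - wz_G n k"
proof -
  have "wz_F n k - wz_F (Suc n) k = wz_F n k * (1 - wz_U_ratio (real n) * wz_K_ratio_n (real n) (real k))"
    unfolding wz_F_Suc_n by (simp add: algebra_simps)
  also have "\<dots> = wz_F n k * (wz_K_ratio_k (real n) (real k) * wz_cert (real n) (real k + 1)
      - wz_cert (real n) (real k))"
    by (simp add: wz_cert_identity)
  also have "\<dots> = wz_G n (Suc k) - wz_G n k"
    unfolding wz_G_def wz_F_Suc_k by (simp add: algebra_simps)
  finally show ?thesis .
qed

section \<open>Decay of F\<close>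

lemma wz_K_ratio_k_le:
  fixes x y :: real
  assumes "x \<ge> 0" "y \<ge> 0"
  shows "wz_K_ratio_k x y * (y+x+3) \<le> y+x+1"
proof -
  have "(y+3*x+1) * (y+x+3) \<le> (y+4*x+2) * (y+5*x+2)"
    using assms by (simp add: algebra_simps)
  then have "(y+x+1) * (y+3*x+1) * (y+x+3) \<le> (y+x+1) * ((y+4*x+2) * (y+5*x+2))"
    using assms by (simp add: mult.assoc mult_left_mono)
  moreover have "(y+4*x+2) * (y+5*x+2) > 0"
    using assms by simp
  ultimately show ?thesis
    unfolding wz_K_ratio_k_def by (simp add: field_simps)
qed

lemma wz_F_weighted_le:
  "wz_F n k * ((real k + real n + 1) * (real k + real n + 2)) \<le> wz_F n 0 * ((real n + 1) * (real n + 2))"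
proof -
  have "decseq (\<lambda>k. wz_F n k * ((real k + real n + 1) * (real k + real n + 2)))"
  proof (rule decseq_SucI)
    fix k
    have "wz_K_ratio_k (real n) (real k) * (real k + real n + 3) \<le> real k + real n + 1"
      by (rule wz_K_ratio_k_le) simp_all
    then have "wz_F n k * (wz_K_ratio_k (real n) (real k) * (real k + real n + 3)) * (real k + real n + 2)
        \<le> wz_F n k * (real k + real n + 1) * (real k + real n + 2)"
      using less_imp_le[OF wz_F_pos] by (intro mult_right_mono mult_left_mono) simp_all
    then show "wz_F n (Suc k) * ((real (Suc k) + real n + 1) * (real (Suc k) + real n + 2))
        \<le> wz_F n k * ((real k + real n + 1) * (real k + real n + 2))"
      unfolding wz_F_Suc_k by (simp add: algebra_simps)
  qed
  from decseqD[OF this, of 0 k] show ?thesis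
    by simp
qed

lemma wz_F_le: "wz_F n k \<le> wz_F n 0 * ((real n + 1) * (real n + 2)) / (real k + 1)^2"
proof -
  have "wz_F n k * (real k + 1)^2 \<le> wz_F n k * ((real k + real n + 1) * (real k + real n + 2))"
    using less_imp_le[OF wz_F_pos] by (intro mult_left_mono) (simp_all add: power2_eq_square mult_mono)
  also have "\<dots> \<le> wz_F n 0 * ((real n + 1) * (real n + 2))"
    by (rule wz_F_weighted_le)
  finally show ?thesis
    by (simp add: field_simps)
qed

lemma wz_F_summable: "summable (wz_F n)"
proof (rule summable_comparison_test')
  show "summable (\<lambda>k. wz_F n 0 * ((real n + 1) * (real n + 2)) * (1 / (real k + 1)^2))"
    using sums_summable[OF inverse_squares_sums] by (intro summable_mult) (simp add: add.commute)
  show "norm (wz_F n k) \<le> wz_F n 0 * ((real n + 1) * (real n + 2)) * (1 / (real k + 1)^2)" for k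
    using wz_F_le[of n k] wz_F_pos[of n k] by simp
qed

lemma wz_ratio_n_at_zero_le:
  fixes x :: real
  assumes x: "x \<ge> 0"
  shows "2 * (wz_U_ratio x * wz_K_ratio_n x 0) * (x+3) \<le> x+1"
proof -
  define num where "num = pochhammer (3*x+1) 3 * pochhammer (2*x+1) 2 * (x+1) * pochhammer (4*x+1) 4
    * ((x+1) * pochhammer (3*x+1) 3)"
  define den where "den = pochhammer (5*x+1) 5 * (pochhammer (4*x+2) 4 * pochhammer (5*x+2) 5)"
  \<comment> \<open>each factor on the left is at most the factor in the same position on the right\<close>
  have "(4*x+1)*(4*x+2)*(4*x+3)*(4*x+4) * ((3*x+1)*(3*x+2)*(3*x+3)) * ((3*x+1)*(3*x+2)*(3*x+3))
        * ((2*x+1)*(2*x+2)) * (2*x+2) * (x+1) * (x+3)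
      \<le> (4*x+2)*(4*x+3)*(4*x+4)*(4*x+5) * ((5*x+1)*(5*x+2)*(5*x+3)) * ((5*x+2)*(5*x+3)*(5*x+4))
        * ((5*x+4)*(5*x+5)) * (5*x+5) * (x+1) * (5*x+6)"
    using x by (intro mult_mono mult_nonneg_nonneg) auto
  also have "(4*x+1)*(4*x+2)*(4*x+3)*(4*x+4) * ((3*x+1)*(3*x+2)*(3*x+3)) * ((3*x+1)*(3*x+2)*(3*x+3))
        * ((2*x+1)*(2*x+2)) * (2*x+2) * (x+1) * (x+3) = 2 * num * (x+3)"
    unfolding num_def pochhammer_numerals by algebra
  also have "(4*x+2)*(4*x+3)*(4*x+4)*(4*x+5) * ((5*x+1)*(5*x+2)*(5*x+3)) * ((5*x+2)*(5*x+3)*(5*x+4))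
        * ((5*x+4)*(5*x+5)) * (5*x+5) * (x+1) * (5*x+6) = (x+1) * den"
    unfolding den_def pochhammer_numerals by algebra
  finally have "2 * num * (x+3) \<le> (x+1) * den" .
  moreover have "den > 0"
    unfolding den_def using x by (intro mult_pos_pos pochhammer_pos) auto
  ultimately have "2 * num * (x+3) / den \<le> x+1"
    by (simp add: pos_divide_le_eq mult.commute)
  moreover have "wz_U_ratio x * wz_K_ratio_n x 0 = num / den"
    unfolding wz_U_ratio_def wz_K_ratio_n_def num_def den_def by simp
  ultimately show ?thesis
    by simp
qed

lemma wz_F_weighted_halving:
  "wz_F (Suc n) 0 * ((real n + 2) * (real n + 3)) \<le> wz_F n 0 * ((real n + 1) * (real n + 2)) / 2"
proof -
  define r where "r = wz_U_ratio (real n) * wz_K_ratio_n (real n) 0"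
  have "2 * r * (real n + 3) * (real n + 2) \<le> (real n + 1) * (real n + 2)"
    unfolding r_def using wz_ratio_n_at_zero_le[of "real n"] by (intro mult_right_mono) simp_all
  then have "r * ((real n + 2) * (real n + 3)) \<le> (real n + 1) * (real n + 2) / 2"
    by (simp add: algebra_simps)
  then have "wz_F n 0 * (r * ((real n + 2) * (real n + 3)))
      \<le> wz_F n 0 * ((real n + 1) * (real n + 2) / 2)"
    using less_imp_le[OF wz_F_pos] by (rule mult_left_mono)
  then show ?thesis
    unfolding wz_F_Suc_n r_def by (simp add: mult_ac)
qed

lemma wz_F_0_0: "wz_F 0 0 = 18"
  unfolding wz_F_def wz_U_def wz_K_def by simp

lemma wz_F_weighted_le_geometric: "wz_F n 0 * ((real n + 1) * (real n + 2)) \<le> 36 * (1/2)^n"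
proof (induction n)
  case (Suc n)
  have "wz_F (Suc n) 0 * ((real (Suc n) + 1) * (real (Suc n) + 2))
      \<le> wz_F n 0 * ((real n + 1) * (real n + 2)) / 2"
    using wz_F_weighted_halving[of n] by (simp add: algebra_simps)
  also have "\<dots> \<le> 36 * (1/2)^Suc n"
    using Suc.IH by simp
  finally show ?case .
qed (simp add: wz_F_0_0)

lemma wz_F_suminf_le: "suminf (wz_F n) \<le> 6 * pi^2 * (1/2)^n"
proof -
  define C where "C = wz_F n 0 * ((real n + 1) * (real n + 2))"
  have C_sums: "(\<lambda>k. C * (1 / (real k + 1)^2)) sums (C * (pi^2 / 6))"
    using sums_mult[OF inverse_squares_sums, of C] by (simp add: add.commute)
  have "suminf (wz_F n) \<le> (\<Sum>k. C * (1 / (real k + 1)^2))"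
    using wz_F_le[of n] wz_F_summable[of n] sums_summable[OF C_sums]
    unfolding C_def by (intro suminf_le) simp_all
  also have "\<dots> = C * (pi^2 / 6)"
    using C_sums by (rule sums_unique[symmetric])
  also have "\<dots> \<le> 36 * (1/2)^n * (pi^2 / 6)"
    unfolding C_def by (intro mult_right_mono wz_F_weighted_le_geometric) simp
  finally show ?thesis
    by simp
qed

lemma wz_F_suminf_tendsto_zero: "(\<lambda>n. suminf (wz_F n)) \<longlonglongrightarrow> 0"
proof (rule Lim_null_comparison)
  show "\<forall>\<^sub>F n in sequentially. norm (suminf (wz_F n)) \<le> 6 * pi^2 * (1/2)^n"
    using wz_F_suminf_le suminf_nonneg[OF wz_F_summable less_imp_le[OF wz_F_pos]]
    by (intro always_eventually) simp
  show "(\<lambda>n. 6 * pi^2 * (1/2::real)^n) \<longlonglongrightarrow> 0"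
    by (intro tendsto_mult_right_zero LIMSEQ_power_zero) simp
qed

lemma abs_wz_cert_le:
  fixes x y :: real
  assumes "x \<ge> 0" "y \<ge> 0"
  shows "\<bar>wz_cert x y\<bar> \<le> (\<Sum>j\<le>8. \<bar>wz_Q_coeffs x ! j\<bar>) / pochhammer (5*x+1) 5 * (y+1)"
proof -
  define C where "C = (\<Sum>j\<le>8. \<bar>wz_Q_coeffs x ! j\<bar>)"
  define P where "P = pochhammer (5*x+1) 5"
  define E where "E = pochhammer (y+4*x+2) 3 * pochhammer (y+5*x+2) 4"
  have Q: "\<bar>wz_Q x y\<bar> \<le> C * (y+1)^8"
    unfolding wz_Q_def C_def using assms(2) by (rule abs_sum_powers_le)
  have E: "(y+1)^3 * (y+1)^4 \<le> E"
    unfolding E_def using assms by (intro mult_mono power_le_pochhammer pochhammer_nonneg) auto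
  have P: "P > 0"
    unfolding P_def using assms by (intro pochhammer_pos) simp
  have "0 < (y+1)^3 * (y+1)^4"
    using assms by simp
  with E have "E > 0"
    by linarith
  with P have "\<bar>wz_cert x y\<bar> = \<bar>wz_Q x y\<bar> / (P * E)"
    unfolding wz_cert_def P_def[symmetric] E_def[symmetric] by (simp add: abs_mult)
  also have "\<dots> \<le> C * (y+1)^8 / (P * ((y+1)^3 * (y+1)^4))"
    using assms Q E P by (intro frac_le mult_left_mono) auto
  also have "\<dots> = C / P * (y+1)"
  proof -
    have "(y+1)^8 = ((y+1)^3 * (y+1)^4) * (y+1)" "(y+1)^3 * (y+1)^4 \<noteq> 0"
      using assms by (simp_all flip: power_add power_Suc2)
    then show ?thesis
      by simp
  qed
  finally show ?thesis
    unfolding C_def P_def .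
qed

lemma wz_G_tendsto_zero: "wz_G n \<longlonglongrightarrow> 0"
proof (rule Lim_null_comparison)
  define A where "A = wz_F n 0 * ((real n + 1) * (real n + 2))"
  define B where "B = (\<Sum>j\<le>8. \<bar>wz_Q_coeffs (real n) ! j\<bar>) / pochhammer (5 * real n + 1) 5"
  show "\<forall>\<^sub>F k in sequentially. norm (wz_G n k) \<le> A * B * inverse (real (Suc k))"
  proof (intro always_eventually allI)
    fix k
    have "norm (wz_G n k) = wz_F n k * \<bar>wz_cert (real n) (real k)\<bar>"
      unfolding wz_G_def using wz_F_pos[of n k] by (simp add: abs_mult)
    also have "\<dots> \<le> A / (real k + 1)^2 * (B * (real k + 1))"
      unfolding A_def B_def
      using wz_F_le abs_wz_cert_le[of "real n" "real k"] less_imp_le[OF wz_F_pos]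
      by (intro mult_mono) simp_all
    also have "\<dots> = A * B * inverse (real (Suc k))"
      by (simp add: power2_eq_square divide_inverse)
    finally show "norm (wz_G n k) \<le> A * B * inverse (real (Suc k))" .
  qed
  show "(\<lambda>k. A * B * inverse (real (Suc k))) \<longlonglongrightarrow> 0"
    by (rule tendsto_mult_right_zero[OF LIMSEQ_inverse_real_of_nat])
qed

section \<open>The boundary terms\<close>

lemma wz_F_zero_sums: "wz_F 0 sums (3 * pi^2)"
proof -
  have "wz_K 0 k = 1 / (real k + 1)^2" for k
    unfolding wz_K_def by (simp add: power2_eq_square add.commute)
  then have "wz_F 0 k = 18 * (1 / (real k + 1)^2)" for k
    unfolding wz_F_def wz_U_def by simp
  then have "wz_F 0 = (\<lambda>k. 18 * (1 / (real k + 1)^2))"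
    by (rule ext)
  then show ?thesis
    using sums_mult[OF inverse_squares_sums, of 18] by (simp add: add.commute)
qed

lemma wz_Q_at_zero: "wz_Q x 0 = - p15 (x+1) * (x+1)^2 * pochhammer (4*x+1) 4"
  unfolding wz_Q_expand by (simp add: wz_Q_coeffs_def p15_def pochhammer_numerals) algebra

lemma wz_G_zero_closed_form:
  "- wz_G n 0 = 18 * p15 (real n + 1) * (real n + 1)^2 * fact (3*n)^2 * fact (2*n) * fact n ^ 2
     / fact (5 * Suc n)^2"
proof -
  define x where "x = real n"
  have f4: "fact (4*n+1) * pochhammer (4*x+2) 3 = fact (4*n) * pochhammer (4*x+1) 4"
    using fact_add_pochhammer[of "4*n+1" 3, where 'a = real] fact_add_pochhammer[of "4*n" 4, where 'a = real]
    by (simp add: x_def add.commute)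
  have f5: "fact (5*n+1) * pochhammer (5*x+2) 4 = fact (5*n) * pochhammer (5*x+1) 5"
    using fact_add_pochhammer[of "5*n+1" 4, where 'a = real] fact_add_pochhammer[of "5*n" 5, where 'a = real]
    by (simp add: x_def add.commute)
  have "- wz_G n 0 = 18 * fact (3*n) * fact (2*n) * fact n * fact (4*n) * (fact n * fact (3*n))
      * (p15 (x+1) * (x+1)^2 * pochhammer (4*x+1) 4)
      / (fact (5*n) * ((fact (4*n+1) * pochhammer (4*x+2) 3) * (fact (5*n+1) * pochhammer (5*x+2) 4))
         * pochhammer (5*x+1) 5)"
    unfolding wz_G_def wz_F_def wz_U_def wz_K_def wz_cert_def x_def
    by (simp add: wz_Q_at_zero mult_ac)
  also have "\<dots> = 18 * fact (3*n) * fact (2*n) * fact n * fact (4*n) * (fact n * fact (3*n))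
      * (p15 (x+1) * (x+1)^2 * pochhammer (4*x+1) 4)
      / (fact (5*n) * ((fact (4*n) * pochhammer (4*x+1) 4) * (fact (5*n) * pochhammer (5*x+1) 5))
         * pochhammer (5*x+1) 5)"
    unfolding f4 f5 ..
  also have "\<dots> = 18 * p15 (x+1) * (x+1)^2 * fact (3*n)^2 * fact (2*n) * fact n ^ 2
      / (fact (5*n) * pochhammer (5*x+1) 5)^2"
    using pochhammer_pos[of "4*x+1" 4] by (simp add: x_def power2_eq_square mult_ac)
  finally show ?thesis
    unfolding fact_mult_Suc x_def by simp
qed

lemma term15_Suc_closed_form:
  "term15 (Suc n) = 18 * p15 (real n + 1) * (real n + 1)^2 * fact (3*n)^2 * fact (2*n) * fact n ^ 2
     / fact (5 * Suc n)^2"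
proof -
  define u where "u = real n + 1"
  define a where "a = 3 * real n + 1"
  define b where "b = 3 * real n + 2"
  define c where "c = 2 * real n + 1"
  have pos: "u > 0" "a > 0" "b > 0" "c > 0"
    unfolding u_def a_def b_def c_def by simp_all
  have fact3: "fact (3 * Suc n) = a * b * (3 * u) * fact (3*n)"
    unfolding fact_mult_Suc a_def b_def u_def pochhammer_numerals by (simp add: algebra_simps)
  have fact2: "fact (2 * Suc n) = c * (2 * u) * fact (2*n)"
    unfolding fact_mult_Suc c_def u_def pochhammer_numerals by (simp add: algebra_simps)
  have fact1: "fact (Suc n) = u * fact n"
    unfolding u_def by simp
  have "5 * Suc n - 3 * Suc n = 2 * Suc n" "2 * Suc n - Suc n = Suc n"
    by simp_all
  then have binomials:
    "real (5 * Suc n choose (3 * Suc n)) = fact (5 * Suc n) / (fact (3 * Suc n) * fact (2 * Suc n))"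
    "real (2 * Suc n choose Suc n) = fact (2 * Suc n) / (fact (Suc n) * fact (Suc n))"
    using binomial_fact[of "3 * Suc n" "5 * Suc n", where 'a = real]
      binomial_fact[of "Suc n" "2 * Suc n", where 'a = real]
    by simp_all
  have "term15 (Suc n) = p15 u / (u^3 * a^2 * b^2 * c
      * (fact (5 * Suc n) / ((a * b * (3 * u) * fact (3*n)) * (c * (2 * u) * fact (2*n))))^2
      * ((c * (2 * u) * fact (2*n)) / ((u * fact n) * (u * fact n))))"
    unfolding term15_def binomials fact3 fact2 fact1
    by (simp add: u_def a_def b_def c_def add.commute)
  also have "\<dots> = 18 * p15 u * u^2 * fact (3*n)^2 * fact (2*n) * fact n ^ 2 / fact (5 * Suc n)^2"
    using pos by (simp add: field_simps power2_eq_square power3_eq_cube)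
  finally show ?thesis
    unfolding u_def .
qed

theorem mainTheorem15:
  shows "(\<lambda>n. term15 (n + 1)) sums (3 * pi^2)"
proof -
  have "(\<lambda>n. - wz_G n 0) sums suminf (wz_F 0)"
    using wz_F_pair wz_F_summable wz_G_tendsto_zero wz_F_suminf_tendsto_zero
    by (rule WZ_pair_sums)
  then show ?thesis
    using wz_F_zero_sums by (simp add: term15_Suc_closed_form wz_G_zero_closed_form sums_iff)
qed

end
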